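(* In the setting below with integral arrivals ($T=m$, $q_{tj}=1/m$) and running Algorithm RAND-ORDER($\alpha$) with $\alpha\ge1$, for every customer type $j$, every assortment $S\in\mathcal{S}$ and every item $i\in S$: conditional on at least one customer of type $j$ arriving, the probability that item $i$ has already been shown to customer $t_j$ (i.e., was contained in an assortment offered to her) before the algorithm reaches $S$ in the ordering $\pi$ used for customer $t_j$ is at most $\frac{1}{2\alpha}$. Here $t_j$ denotes the first customer of type $j$ to arrive.
   Context: Multi-stage multi-customer assortment problem without repeated offerings. There are $n$ items, each with one unit of inventory, $m$ customer types and $T$ time-steps; in time-step $t$, independently, a customer of type $j$ arrives with probability $q_{tj}\ge0$ ($\sum_jq_{tj}\le1$). $\mathcal{S}$ is a downward-closed family of subsets of $\{1,\dots,n\}$. For each type $j$, $S\in\mathcal{S}$, $i\in S$, $p_j(i,S)\ge0$ is the probability that a type-$j$ customer offered $S$ purchases $i$, with $\sum_{i\in S}p_j(i,S)\le1$; substitutability: $p_j(i,S)\ge p_j(i,S\cup\{i'\})$ for $i'\ne i$. Type $j$ has patience $\ell_j\in\mathbb{Z}_{>0}$: an arriving type-$j$ customer is shown a sequence of at most $\ell_j$ pairwise disjoint assortments from $\mathcal{S}$ of currently available items; at each stage her purchase decision follows the choice probabilities independently of everything else; she leaves upon a purchase or when the sequence ends. MCDLP-NR is the LP: maximize $\sum_{t=1}^T\sum_{j=1}^mq_{tj}\sum_{S\in\mathcal{S}}x_j(S)\sum_{i\in S}r_{ij}p_j(i,S)$ subject to $\sum_{t}\sum_{j}q_{tj}\sum_{S\ni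 i}x_j(S)p_j(i,S)\le1$ for all $i$; $\sum_{S}x_j(S)\sum_{i\in S}p_j(i,S)\le1$ for all $j$; $\sum_{S}x_j(S)\le\ell_j$ for all $j$; $\sum_{S\ni i}x_j(S)\le1$ for all $i,j$; $x\ge0$ (with $r_{ij}\ge 0$ revenues). Algorithm RAND-ORDER($\alpha$), for a parameter $\alpha\ge1$: solve MCDLP-NR for an optimal $x^*$. When a customer of type $j$ arrives at time $t$: if some earlier customer had type $j$, offer her nothing. Otherwise draw a uniformly random ordering $\pi$ of $\mathcal{S}$ and go through the assortments $S$ in the order $\pi$; for each $S$, independently with probability $x^*_j(S)/\alpha$, offer (as one stage) the assortment $S$ with all sold-out items and all items previously shown to this customer removed; stop as soon as the customer purchases an item or $\ell_j$ assortments have been offered. *)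

theory Defs
  imports "HOL-Probability.Probability" "HOL-Combinatorics.Multiset_Permutations"
begin

(* Items have type 'a (finite), customer types have type 'b (finite, m = CARD('b)).
   x :: 'b => 'a set => real  is an LP solution x_j(S);  p j i S = p_j(i,S);  l j = patience. *)

definition mcdlp_feasible ::
  "nat \<Rightarrow> (nat \<Rightarrow> 'b::finite \<Rightarrow> real) \<Rightarrow> ('b \<Rightarrow> 'a::finite \<Rightarrow> 'a set \<Rightarrow> real)
   \<Rightarrow> ('b \<Rightarrow> nat) \<Rightarrow> 'a set set \<Rightarrow> ('b \<Rightarrow> 'a set \<Rightarrow> real) \<Rightarrow> bool" where
  "mcdlp_feasible T q p l SS x \<longleftrightarrow>
     (\<forall>i. (\<Sum>t\<in>{1..T}. \<Sum>j\<in>UNIV. q t j * (\<Sum>S\<in>{S\<in>SS. i \<in> S}. x j S * p j i S)) \<le> 1) \<and>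
     (\<forall>j. (\<Sum>S\<in>SS. x j S * (\<Sum>i\<in>S. p j i S)) \<le> 1) \<and>
     (\<forall>j. (\<Sum>S\<in>SS. x j S) \<le> real (l j)) \<and>
     (\<forall>i j. (\<Sum>S\<in>{S\<in>SS. i \<in> S}. x j S) \<le> 1) \<and>
     (\<forall>j. \<forall>S\<in>SS. x j S \<ge> 0)"

definition mcdlp_objective ::
  "nat \<Rightarrow> (nat \<Rightarrow> 'b::finite \<Rightarrow> real) \<Rightarrow> ('b \<Rightarrow> 'a::finite \<Rightarrow> 'a set \<Rightarrow> real)
   \<Rightarrow> ('a \<Rightarrow> 'b \<Rightarrow> real) \<Rightarrow> 'a set set \<Rightarrow> ('b \<Rightarrow> 'a set \<Rightarrow> real) \<Rightarrow> real" where
  "mcdlp_objective T q p r SS x =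
     (\<Sum>t\<in>{1..T}. \<Sum>j\<in>UNIV. q t j * (\<Sum>S\<in>SS. x j S * (\<Sum>i\<in>S. r i j * p j i S)))"

definition mcdlp_optimal ::
  "nat \<Rightarrow> (nat \<Rightarrow> 'b::finite \<Rightarrow> real) \<Rightarrow> ('b \<Rightarrow> 'a::finite \<Rightarrow> 'a set \<Rightarrow> real)
   \<Rightarrow> ('a \<Rightarrow> 'b \<Rightarrow> real) \<Rightarrow> ('b \<Rightarrow> nat) \<Rightarrow> 'a set set \<Rightarrow> ('b \<Rightarrow> 'a set \<Rightarrow> real) \<Rightarrow> bool" where
  "mcdlp_optimal T q p r l SS x \<longleftrightarrow>
     mcdlp_feasible T q p l SS x \<and>
     (\<forall>y. mcdlp_feasible T q p l SS y \<longrightarrow> mcdlp_objective T q p r SS y \<le> mcdlp_objective T q p r SS x)"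

definition choice_pmf :: "('b \<Rightarrow> 'a \<Rightarrow> 'a set \<Rightarrow> real) \<Rightarrow> 'b \<Rightarrow> 'a set \<Rightarrow> 'a option pmf" where
  "choice_pmf p j A = embed_pmf (\<lambda>oc. case oc of
       None \<Rightarrow> 1 - (\<Sum>i\<in>A. p j i A)
     | Some i \<Rightarrow> (if i \<in> A then p j i A else 0))"

text \<open>Goes through the ordering pi; k = number of stages offered so far, shown = items already
  shown to this customer, sold = sold-out items. Returns the list of stages (S, A, c): the
  assortment S of pi that was selected, the actually offered set A (S minus sold-out and
  previously shown items) and the purchase decision c.\<close>
fun offer_seq :: "('b \<Rightarrow> 'a set \<Rightarrow> real) \<Rightarrow> real \<Rightarrow> ('b \<Rightarrow> 'a \<Rightarrow> 'a set \<Rightarrow> real) \<Rightarrow> nat \<Rightarrow> 'b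
   \<Rightarrow> 'a set \<Rightarrow> 'a set list \<Rightarrow> 'a set \<Rightarrow> nat \<Rightarrow> ('a set \<times> 'a set \<times> 'a option) list pmf" where
  "offer_seq x \<alpha> p L j sold [] shown k = return_pmf []"
| "offer_seq x \<alpha> p L j sold (S # rest) shown k =
     (if L \<le> k then return_pmf []
      else bind_pmf (bernoulli_pmf (x j S / \<alpha>)) (\<lambda>b.
        if b then
          (let A = S - sold - shown in
           bind_pmf (choice_pmf p j A) (\<lambda>c.
             case c of
               Some _ \<Rightarrow> return_pmf [(S, A, c)]
             | None \<Rightarrow> map_pmf ((#) (S, A, c)) (offer_seq x \<alpha> p L j sold rest (shown \<union> A) (Suc k))))
        else offer_seq x \<alpha> p L j sold rest shown k))"

text \<open>State: (sold-out items, hist). hist j = Some (pi, stages) records the ordering and the stages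
  of the first customer of type j; None if no customer of type j has arrived yet.\<close>
type_synonym ('a, 'b) ro_state =
  "'a set \<times> ('b \<Rightarrow> ('a set list \<times> ('a set \<times> 'a set \<times> 'a option) list) option)"

definition ro_step :: "('b::finite \<Rightarrow> 'a set \<Rightarrow> real) \<Rightarrow> real \<Rightarrow> ('b \<Rightarrow> 'a \<Rightarrow> 'a set \<Rightarrow> real)
   \<Rightarrow> ('b \<Rightarrow> nat) \<Rightarrow> 'a set set \<Rightarrow> ('a, 'b) ro_state \<Rightarrow> ('a, 'b) ro_state pmf" where
  "ro_step x \<alpha> p l SS st =
     bind_pmf (pmf_of_set (UNIV :: 'b set)) (\<lambda>j.
       case st of (sold, hist) \<Rightarrow>
         if hist j \<noteq> None then return_pmf (sold, hist)
         else bind_pmf (pmf_of_set (permutations_of_set SS)) (\<lambda>\<pi>.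
                map_pmf (\<lambda>stages.
                   (sold \<union> {i. \<exists>S A. (S, A, Some i) \<in> set stages}, hist(j := Some (\<pi>, stages))))
                 (offer_seq x \<alpha> p (l j) j sold \<pi> {} 0)))"

fun ro_run :: "('b::finite \<Rightarrow> 'a set \<Rightarrow> real) \<Rightarrow> real \<Rightarrow> ('b \<Rightarrow> 'a \<Rightarrow> 'a set \<Rightarrow> real)
   \<Rightarrow> ('b \<Rightarrow> nat) \<Rightarrow> 'a set set \<Rightarrow> nat \<Rightarrow> ('a, 'b) ro_state pmf" where
  "ro_run x \<alpha> p l SS 0 = return_pmf ({}, (\<lambda>_. None))"
| "ro_run x \<alpha> p l SS (Suc t) = bind_pmf (ro_run x \<alpha> p l SS t) (ro_step x \<alpha> p l SS)"

definition shown_before :: "'b \<Rightarrow> 'a set \<Rightarrow> 'a \<Rightarrow> ('a, 'b) ro_state \<Rightarrow> bool" where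
  "shown_before j S i st = (case snd st j of
      None \<Rightarrow> False
    | Some (\<pi>, stages) \<Rightarrow>
        (\<exists>S' A c. (S', A, c) \<in> set stages \<and> i \<in> A \<and> S' \<in> set (takeWhile (\<lambda>U. U \<noteq> S) \<pi>)))"

definition type_arrived :: "'b \<Rightarrow> ('a, 'b) ro_state \<Rightarrow> bool" where
  "type_arrived j st = (snd st j \<noteq> None)"

end

theory Submission
  imports Defs
begin

text \<open>
  By the union bound, the probability that the first type-j customer is shown item i by an
  assortment preceding S in her ordering \<pi> is at most the sum, over the assortments S' \<ni> i
  preceding S, of the offer probabilities x j S' / \<alpha>. Pairing \<pi> with its reverse shows that
  under a uniformly random ordering each S' precedes S with probability at most 1/2, so the
  expected bound is at most half the sum of x j S' / \<alpha> over all S' \<ni> i, which the LP constraint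
  bounds by 1/(2\<alpha>).
  For the whole process, with c = 1/(2\<alpha>), the function
  1[type j arrived and i shown before S] - c \<cdot> 1[type j arrived] has nonincreasing expectation
  along the arrivals: it can change only at the first arrival of type j, where its conditional
  expectation is at most the bound above minus c \<le> 0.
\<close>

lemma expectation_bind_pmf:
  fixes f :: "'b \<Rightarrow> real"
  assumes "\<And>y. \<bar>f y\<bar> \<le> B"
  shows "measure_pmf.expectation (bind_pmf M N) f
         = measure_pmf.expectation M (\<lambda>x. measure_pmf.expectation (N x) f)"
  using measurable_measure_pmf[of N] unfolding measure_pmf_bind
  by (intro integral_bind[where K="count_space UNIV" and B=B and B'=1])
     (auto simp: assms measure_pmf.emeasure_space_1 intro: measure_pmf.finite_measure)

lemma expectation_abs_le:
  fixes f :: "'b \<Rightarrow> real"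
  assumes "\<And>y. \<bar>f y\<bar> \<le> B"
  shows "\<bar>measure_pmf.expectation M f\<bar> \<le> B"
proof -
  have "\<bar>measure_pmf.expectation M f\<bar> \<le> measure_pmf.expectation M (\<lambda>y. \<bar>f y\<bar>)"
    by (rule integral_abs_bound)
  also have "\<dots> \<le> B"
    using assms by (intro measure_pmf.integral_le_const measure_pmf.integrable_const_bound[where B=B]) auto
  finally show ?thesis .
qed

lemma expectation_bind_pmf_mono:
  fixes f :: "'b \<Rightarrow> real" and g :: "'a \<Rightarrow> real"
  assumes f: "\<And>y. \<bar>f y\<bar> \<le> B" and g: "\<And>x. \<bar>g x\<bar> \<le> B'"
    and le: "\<And>x. x \<in> set_pmf M \<Longrightarrow> measure_pmf.expectation (N x) f \<le> g x"
  shows "measure_pmf.expectation (bind_pmf M N) f \<le> measure_pmf.expectation M g"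
  unfolding expectation_bind_pmf[OF f]
  by (intro integral_mono_AE measure_pmf.integrable_const_bound[where B=B]
            measure_pmf.integrable_const_bound[where B=B'])
     (auto simp: AE_measure_pmf_iff le g intro: expectation_abs_le[OF f])

lemma prob_bind_pmf:
  "measure_pmf.prob (bind_pmf M N) A = measure_pmf.expectation M (\<lambda>x. measure_pmf.prob (N x) A)"
  using expectation_bind_pmf[of "indicator A" 1 M N] by (simp split: split_indicator)

lemma prob_bind_pmf_le:
  assumes "\<And>x. x \<in> set_pmf M \<Longrightarrow> measure_pmf.prob (N x) A \<le> C"
  shows "measure_pmf.prob (bind_pmf M N) A \<le> C"
  unfolding prob_bind_pmf
  by (intro measure_pmf.integral_le_const measure_pmf.integrable_const_bound[where B=1])
     (auto simp: AE_measure_pmf_iff assms)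

lemma prob_bind_pmf_bool:
  fixes B :: "bool pmf"
  shows "measure_pmf.prob (bind_pmf B N) A
         = pmf B True * measure_pmf.prob (N True) A + pmf B False * measure_pmf.prob (N False) A"
  unfolding prob_bind_pmf by (subst integral_measure_pmf[of UNIV]) (auto simp: UNIV_bool)

lemma pmf_bernoulli_True_le: "0 \<le> q \<Longrightarrow> pmf (bernoulli_pmf q) True \<le> q"
  by (simp add: bernoulli_pmf.rep_eq)

lemma pmf_True_add_pmf_False: "pmf B True + pmf B False = 1"
proof -
  have "(\<Sum>b\<in>UNIV. pmf B b) = 1" by (rule sum_pmf_eq_1) auto
  then show ?thesis by (simp add: UNIV_bool)
qed

definition shown_via :: "'a set set \<Rightarrow> 'a \<Rightarrow> ('a set \<times> 'a set \<times> 'a option) list \<Rightarrow> bool" where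
  "shown_via P i stages \<longleftrightarrow> (\<exists>S' A c. (S', A, c) \<in> set stages \<and> i \<in> A \<and> S' \<in> P)"

lemma shown_via_Cons_irrelevant:
  "S \<notin> P \<or> i \<notin> A \<Longrightarrow> shown_via P i ((S, A, c) # stages) \<longleftrightarrow> shown_via P i stages"
  by (auto simp: shown_via_def)

lemma prob_offer_seq_shown_via_le:
  "measure_pmf.prob (offer_seq x \<alpha> p L j sold \<pi> shown k) {stages. shown_via P i stages}
   \<le> (\<Sum>S'\<leftarrow>\<pi>. if S' \<in> P \<and> i \<in> S' then pmf (bernoulli_pmf (x j S' / \<alpha>)) True else 0)"
proof (induction \<pi> arbitrary: shown k)
  case Nil
  then show ?case by (simp add: shown_via_def)
next
  case (Cons S rest)
  let ?E = "{stages. shown_via P i stages}"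
  define R where "R = (\<Sum>S'\<leftarrow>rest. if S' \<in> P \<and> i \<in> S' then pmf (bernoulli_pmf (x j S' / \<alpha>)) True else 0)"
  define B where "B = bernoulli_pmf (x j S / \<alpha>)"
  define \<delta> where "\<delta> = (if S \<in> P \<and> i \<in> S then 1 else 0 :: real)"
  have IH: "measure_pmf.prob (offer_seq x \<alpha> p L j sold rest shown' k') ?E \<le> R" for shown' k'
    unfolding R_def by (rule Cons.IH)
  have "0 \<le> R"
    unfolding R_def by (intro sum_list_nonneg) auto
  show ?case
  proof (cases "L \<le> k")
    case True
    have "0 \<le> (\<Sum>S'\<leftarrow>S # rest. if S' \<in> P \<and> i \<in> S' then pmf (bernoulli_pmf (x j S' / \<alpha>)) True else 0)"
      by (intro sum_list_nonneg) auto
    with True show ?thesis by (simp add: shown_via_def)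
  next
    case False
    define A where "A = S - sold - shown"
    define offer_rest where "offer_rest =
      (\<lambda>c. case c of
              Some _ \<Rightarrow> return_pmf [(S, A, c)]
            | None \<Rightarrow> map_pmf ((#) (S, A, c)) (offer_seq x \<alpha> p L j sold rest (shown \<union> A) (Suc k)))"
    have unfold: "offer_seq x \<alpha> p L j sold (S # rest) shown k
      = bind_pmf B (\<lambda>b. if b then bind_pmf (choice_pmf p j A) offer_rest
                        else offer_seq x \<alpha> p L j sold rest shown k)"
      using False unfolding B_def A_def offer_rest_def by (simp add: Let_def cong: if_cong)
    have offered: "measure_pmf.prob (bind_pmf (choice_pmf p j A) offer_rest) ?E \<le> \<delta> + R"
    proof (cases "S \<in> P \<and> i \<in> S")
      case True
      then show ?thesis using \<open>0 \<le> R\<close> by (simp add: \<delta>_def add_increasing2)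
    next
      case irrelevant: False
      then have "S \<notin> P \<or> i \<notin> A" by (auto simp: A_def)
      then have "(#) (S, A, c) -` ?E = ?E" "[(S, A, c)] \<notin> ?E" for c
        by (auto simp: shown_via_Cons_irrelevant) (auto simp: shown_via_def)
      then have "measure_pmf.prob (offer_rest c) ?E \<le> R" for c
        using IH \<open>0 \<le> R\<close> by (cases c) (simp_all add: offer_rest_def)
      moreover have "\<delta> = 0" using irrelevant by (simp add: \<delta>_def)
      ultimately show ?thesis by (intro prob_bind_pmf_le) simp
    qed
    have "measure_pmf.prob (offer_seq x \<alpha> p L j sold (S # rest) shown k) ?E
        \<le> pmf B True * (\<delta> + R) + pmf B False * R"
      unfolding unfold prob_bind_pmf_bool
      using offered IH by (intro add_mono mult_left_mono) auto
    also have "\<dots> = pmf B True * \<delta> + R"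
      using pmf_True_add_pmf_False[of B] by algebra
    also have "\<dots> = (\<Sum>S'\<leftarrow>S # rest. if S' \<in> P \<and> i \<in> S' then pmf (bernoulli_pmf (x j S' / \<alpha>)) True else 0)"
      by (simp add: R_def B_def \<delta>_def)
    finally show ?thesis .
  qed
qed

lemma takeWhile_neq_rev_disjoint:
  assumes "distinct \<pi>" "S \<in> set \<pi>"
  shows "set (takeWhile (\<lambda>U. U \<noteq> S) \<pi>) \<inter> set (takeWhile (\<lambda>U. U \<noteq> S) (rev \<pi>)) = {}"
proof -
  obtain xs ys where \<pi>: "\<pi> = xs @ S # ys" using split_list[OF assms(2)] by blast
  with assms(1) have "S \<notin> set xs" "S \<notin> set ys" "set xs \<inter> set ys = {}" by auto
  with \<pi> have "takeWhile (\<lambda>U. U \<noteq> S) \<pi> = xs" "takeWhile (\<lambda>U. U \<noteq> S) (rev \<pi>) = rev ys"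
    by (auto simp: takeWhile_tail)
  with \<open>set xs \<inter> set ys = {}\<close> show ?thesis by simp
qed

lemma expectation_sum_before_in_random_permutation_le:
  fixes w :: "'c \<Rightarrow> real"
  assumes fin: "finite SS" and S: "S \<in> SS" and w: "\<And>S'. S' \<in> SS \<Longrightarrow> 0 \<le> w S'"
  shows "measure_pmf.expectation (pmf_of_set (permutations_of_set SS))
           (\<lambda>\<pi>. \<Sum>S'\<in>set (takeWhile (\<lambda>U. U \<noteq> S) \<pi>). w S') \<le> (\<Sum>S'\<in>SS. w S') / 2"
proof -
  define Ps where "Ps = permutations_of_set SS"
  define f where "f = (\<lambda>\<pi>. \<Sum>S'\<in>set (takeWhile (\<lambda>U. U \<noteq> S) \<pi>). w S')"
  have Ps: "finite Ps" "Ps \<noteq> {}" using fin by (auto simp: Ps_def)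
  have rev_invariant: "sum f Ps = sum (\<lambda>\<pi>. f (rev \<pi>)) Ps"
  proof -
    have "sum f Ps = sum f (rev ` Ps)" by (simp add: Ps_def)
    also have "\<dots> = sum (\<lambda>\<pi>. f (rev \<pi>)) Ps" by (rule sum.reindex_cong[where l=rev]) (auto intro: inj_onI)
    finally show ?thesis .
  qed
  have pair: "f \<pi> + f (rev \<pi>) \<le> (\<Sum>S'\<in>SS. w S')" if "\<pi> \<in> Ps" for \<pi>
  proof -
    have \<pi>: "distinct \<pi>" "set \<pi> = SS" using that by (auto simp: Ps_def permutations_of_set_def)
    have "f \<pi> + f (rev \<pi>) = (\<Sum>S'\<in>set (takeWhile (\<lambda>U. U \<noteq> S) \<pi>) \<union> set (takeWhile (\<lambda>U. U \<noteq> S) (rev \<pi>)). w S')"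
      unfolding f_def using takeWhile_neq_rev_disjoint[of \<pi> S] \<pi> S
      by (intro sum.union_disjoint[symmetric]) auto
    also have "\<dots> \<le> (\<Sum>S'\<in>SS. w S')"
      using \<pi> w by (intro sum_mono2[OF fin]) (auto dest: set_takeWhileD)
    finally show ?thesis .
  qed
  have "2 * sum f Ps = sum (\<lambda>\<pi>. f \<pi> + f (rev \<pi>)) Ps" using rev_invariant by (simp add: sum.distrib)
  also have "\<dots> \<le> card Ps * (\<Sum>S'\<in>SS. w S')" using sum_mono[OF pair] by simp
  finally have "sum f Ps / card Ps \<le> (\<Sum>S'\<in>SS. w S') / 2"
    using Ps by (simp add: field_simps card_gt_0_iff)
  then show ?thesis using Ps by (simp add: integral_pmf_of_set Ps_def f_def)
qed

definition shown_excess :: "'b \<Rightarrow> 'a set \<Rightarrow> 'a \<Rightarrow> real \<Rightarrow> ('a, 'b) ro_state \<Rightarrow> real" where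
  "shown_excess j S i c st =
     indicator {st. type_arrived j st \<and> shown_before j S i st} st - c * indicator {st. type_arrived j st} st"

lemma abs_shown_excess_le: "\<bar>shown_excess j S i c st\<bar> \<le> 1 + \<bar>c\<bar>"
  unfolding shown_excess_def by (auto split: split_indicator)

lemma expectation_shown_excess:
  "measure_pmf.expectation M (shown_excess j S i c)
   = measure_pmf.prob M {st. type_arrived j st \<and> shown_before j S i st}
     - c * measure_pmf.prob M {st. type_arrived j st}"
  unfolding shown_excess_def
  by (subst Bochner_Integration.integral_diff)
     (auto intro!: measure_pmf.integrable_const_bound[where B=1] integrable_mult_right split: split_indicator)

lemma shown_excess_first_arrival:
  "shown_excess j S i c (sold, hist(j := Some (\<pi>, stages)))
   = indicator {stages. shown_via (set (takeWhile (\<lambda>U. U \<noteq> S) \<pi>)) i stages} stages - c"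
  by (simp add: shown_excess_def type_arrived_def shown_before_def shown_via_def indicator_def)

lemma expectation_first_arrival_shown_excess_le:
  fixes SS :: "'a set set"
  assumes "finite SS" "S \<in> SS"
  shows "measure_pmf.expectation
           (bind_pmf (pmf_of_set (permutations_of_set SS)) (\<lambda>\<pi>.
              map_pmf (\<lambda>stages. (g stages, hist(j := Some (\<pi>, stages))))
                (offer_seq x \<alpha> p L j sold \<pi> {} 0)))
           (shown_excess j S i c)
         \<le> (\<Sum>S'\<in>SS. if i \<in> S' then pmf (bernoulli_pmf (x j S' / \<alpha>)) True else 0) / 2 - c"
proof -
  define Ps where "Ps = permutations_of_set SS"
  define w where "w = (\<lambda>S'. if i \<in> S' then pmf (bernoulli_pmf (x j S' / \<alpha>)) True else 0)"
  define before where "before = (\<lambda>\<pi>::'a set list. set (takeWhile (\<lambda>U. U \<noteq> S) \<pi>))"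
  have Ps: "finite Ps" "Ps \<noteq> {}" using assms(1) by (auto simp: Ps_def)
  have inner: "measure_pmf.expectation
                 (map_pmf (\<lambda>stages. (g stages, hist(j := Some (\<pi>, stages)))) (offer_seq x \<alpha> p L j sold \<pi> {} 0))
                 (shown_excess j S i c)
               \<le> (\<Sum>S'\<in>before \<pi>. w S') - c" if "\<pi> \<in> Ps" for \<pi>
  proof -
    have "distinct \<pi>" using that by (simp add: Ps_def permutations_of_set_def)
    have "measure_pmf.expectation
            (map_pmf (\<lambda>stages. (g stages, hist(j := Some (\<pi>, stages)))) (offer_seq x \<alpha> p L j sold \<pi> {} 0))
            (shown_excess j S i c)
          = measure_pmf.expectation (offer_seq x \<alpha> p L j sold \<pi> {} 0)
              (\<lambda>stages. indicator {stages. shown_via (before \<pi>) i stages} stages - c)"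
      by (simp add: shown_excess_first_arrival before_def)
    also have "\<dots> = measure_pmf.prob (offer_seq x \<alpha> p L j sold \<pi> {} 0) {stages. shown_via (before \<pi>) i stages} - c"
      by (subst Bochner_Integration.integral_diff)
         (auto intro!: measure_pmf.integrable_const_bound[where B=1] split: split_indicator)
    also have "\<dots> \<le> (\<Sum>S'\<leftarrow>\<pi>. if S' \<in> before \<pi> \<and> i \<in> S' then pmf (bernoulli_pmf (x j S' / \<alpha>)) True else 0) - c"
      using prob_offer_seq_shown_via_le by (rule diff_right_mono)
    also have "\<dots> = (\<Sum>S'\<in>set \<pi> \<inter> before \<pi>. w S') - c"
      unfolding sum.inter_restrict[OF finite_set] sum_list_distinct_conv_sum_set[OF \<open>distinct \<pi>\<close>]
      by (intro arg_cong[where f="\<lambda>t. t - c"] sum.cong) (auto simp: w_def)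
    also have "set \<pi> \<inter> before \<pi> = before \<pi>"
      by (auto simp: before_def dest: set_takeWhileD)
    finally show ?thesis .
  qed
  have "measure_pmf.expectation
           (bind_pmf (pmf_of_set Ps) (\<lambda>\<pi>.
              map_pmf (\<lambda>stages. (g stages, hist(j := Some (\<pi>, stages)))) (offer_seq x \<alpha> p L j sold \<pi> {} 0)))
           (shown_excess j S i c)
        \<le> measure_pmf.expectation (pmf_of_set Ps) (\<lambda>\<pi>. (\<Sum>S'\<in>before \<pi>. w S') - c)"
    unfolding expectation_bind_pmf[OF abs_shown_excess_le]
    using Ps inner by (intro integral_mono_AE integrable_measure_pmf_finite) (auto simp: AE_measure_pmf_iff)
  also have "\<dots> = measure_pmf.expectation (pmf_of_set Ps) (\<lambda>\<pi>. \<Sum>S'\<in>before \<pi>. w S') - c"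
    using Ps by (subst Bochner_Integration.integral_diff) (simp_all add: integrable_measure_pmf_finite)
  also have "\<dots> \<le> (\<Sum>S'\<in>SS. w S') / 2 - c"
    unfolding Ps_def before_def
    using assms by (intro diff_right_mono expectation_sum_before_in_random_permutation_le) (auto simp: w_def)
  finally show ?thesis by (simp add: Ps_def w_def)
qed

lemma expectation_ro_step_shown_excess_arrived:
  assumes "hist j \<noteq> None"
  shows "measure_pmf.expectation (ro_step x \<alpha> p l SS (sold, hist)) (shown_excess j S i c)
         = shown_excess j S i c (sold, hist)"
proof -
  have "measure_pmf.expectation (ro_step x \<alpha> p l SS (sold, hist)) (shown_excess j S i c)
        = measure_pmf.expectation (ro_step x \<alpha> p l SS (sold, hist)) (\<lambda>_. shown_excess j S i c (sold, hist))"
    using assms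
    by (intro integral_cong_AE)
       (auto simp: AE_measure_pmf_iff ro_step_def shown_excess_def type_arrived_def shown_before_def
             indicator_def split: if_splits)
  then show ?thesis by simp
qed

lemma expectation_ro_step_shown_excess_le:
  fixes x :: "'b::finite \<Rightarrow> 'a::finite set \<Rightarrow> real" and SS :: "'a set set"
  assumes S: "S \<in> SS"
    and mass: "(\<Sum>S'\<in>SS. if i \<in> S' then pmf (bernoulli_pmf (x j S' / \<alpha>)) True else 0) \<le> 2 * c"
  shows "measure_pmf.expectation (ro_step x \<alpha> p l SS st) (shown_excess j S i c) \<le> shown_excess j S i c st"
proof -
  obtain sold hist where st: "st = (sold, hist)" by (cases st)
  show ?thesis
  proof (cases "hist j = None")
    case False
    then show ?thesis by (simp add: st expectation_ro_step_shown_excess_arrived)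
  next
    case True
    let ?first = "\<lambda>j'. bind_pmf (pmf_of_set (permutations_of_set SS)) (\<lambda>\<pi>.
                   map_pmf (\<lambda>stages. (sold \<union> {i. \<exists>S A. (S, A, Some i) \<in> set stages}, hist(j' := Some (\<pi>, stages))))
                     (offer_seq x \<alpha> p (l j') j' sold \<pi> {} 0))"
    have step: "ro_step x \<alpha> p l SS st
      = bind_pmf (pmf_of_set UNIV) (\<lambda>j'. if hist j' \<noteq> None then return_pmf (sold, hist) else ?first j')"
      by (simp add: st ro_step_def)
    have arrival_le: "measure_pmf.expectation (if hist j' \<noteq> None then return_pmf (sold, hist) else ?first j')
                        (shown_excess j S i c) \<le> 0" for j'
    proof (cases "j' = j")
      case True
      with \<open>hist j = None\<close> show ?thesis
        using expectation_first_arrival_shown_excess_le[OF finite S, of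
                "\<lambda>stages. sold \<union> {i. \<exists>S A. (S, A, Some i) \<in> set stages}" hist j x \<alpha> p "l j" sold i c] mass
        by simp
    next
      case False
      then have "measure_pmf.expectation (if hist j' \<noteq> None then return_pmf (sold, hist) else ?first j')
                   (shown_excess j S i c) = measure_pmf.expectation (if hist j' \<noteq> None then return_pmf (sold, hist) else ?first j') (\<lambda>_. 0)"
        using \<open>hist j = None\<close>
        by (intro integral_cong_AE) (auto simp: AE_measure_pmf_iff shown_excess_def type_arrived_def)
      then show ?thesis by simp
    qed
    have "measure_pmf.expectation (ro_step x \<alpha> p l SS st) (shown_excess j S i c)
          \<le> measure_pmf.expectation (pmf_of_set (UNIV :: 'b set)) (\<lambda>_. 0)"
      unfolding step
      by (rule expectation_bind_pmf_mono[OF abs_shown_excess_le, where B'=0])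
         (simp_all only: abs_zero order_refl arrival_le)
    also have "\<dots> = shown_excess j S i c st"
      using True by (simp add: st shown_excess_def type_arrived_def)
    finally show ?thesis .
  qed
qed

lemma expectation_ro_run_shown_excess_nonpos:
  fixes x :: "'b::finite \<Rightarrow> 'a::finite set \<Rightarrow> real" and SS :: "'a set set"
  assumes "S \<in> SS"
    and "(\<Sum>S'\<in>SS. if i \<in> S' then pmf (bernoulli_pmf (x j S' / \<alpha>)) True else 0) \<le> 2 * c"
  shows "measure_pmf.expectation (ro_run x \<alpha> p l SS t) (shown_excess j S i c) \<le> 0"
proof (induction t)
  case 0
  then show ?case by (simp add: shown_excess_def type_arrived_def)
next
  case (Suc t)
  have "measure_pmf.expectation (ro_run x \<alpha> p l SS (Suc t)) (shown_excess j S i c)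
        \<le> measure_pmf.expectation (ro_run x \<alpha> p l SS t) (shown_excess j S i c)"
    unfolding ro_run.simps
    by (intro expectation_bind_pmf_mono[OF abs_shown_excess_le abs_shown_excess_le]
              expectation_ro_step_shown_excess_le assms)
  with Suc.IH show ?case by linarith
qed

lemma sum_offer_prob_containing_le:
  fixes SS :: "'a::finite set set"
  assumes "mcdlp_feasible T q p l SS x" "\<alpha> > 0"
  shows "(\<Sum>S'\<in>SS. if i \<in> S' then pmf (bernoulli_pmf (x j S' / \<alpha>)) True else 0) \<le> 1 / \<alpha>"
proof -
  have nonneg: "\<And>S'. S' \<in> SS \<Longrightarrow> 0 \<le> x j S'"
    and containing: "(\<Sum>S'\<in>{S'\<in>SS. i \<in> S'}. x j S') \<le> 1"
    using assms(1) unfolding mcdlp_feasible_def by auto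
  have "(\<Sum>S'\<in>SS. if i \<in> S' then pmf (bernoulli_pmf (x j S' / \<alpha>)) True else 0)
        \<le> (\<Sum>S'\<in>SS. if i \<in> S' then x j S' / \<alpha> else 0)"
    using nonneg assms(2) by (intro sum_mono) (auto intro: pmf_bernoulli_True_le)
  also have "\<dots> = (\<Sum>S'\<in>SS. if i \<in> S' then x j S' else 0) / \<alpha>"
    by (simp add: sum_divide_distrib if_distrib[of "\<lambda>t. t / \<alpha>"] cong: if_cong)
  also have "\<dots> = (\<Sum>S'\<in>{S'\<in>SS. i \<in> S'}. x j S') / \<alpha>"
    by (simp add: sum.inter_filter)
  also have "\<dots> \<le> 1 / \<alpha>"
    using containing assms(2) by (simp add: divide_right_mono)
  finally show ?thesis .
qed

theorem lemma4p5:
  fixes SS :: "'a::finite set set"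
    and p :: "'b::finite \<Rightarrow> 'a \<Rightarrow> 'a set \<Rightarrow> real"
    and r :: "'a \<Rightarrow> 'b \<Rightarrow> real"
    and l :: "'b \<Rightarrow> nat"
    and x :: "'b \<Rightarrow> 'a set \<Rightarrow> real"
    and \<alpha> :: real
  assumes down_closed: "\<And>S S'. S \<in> SS \<Longrightarrow> S' \<subseteq> S \<Longrightarrow> S' \<in> SS"
    and p_nonneg: "\<And>j S i. S \<in> SS \<Longrightarrow> i \<in> S \<Longrightarrow> p j i S \<ge> 0"
    and p_sum: "\<And>j S. S \<in> SS \<Longrightarrow> (\<Sum>i\<in>S. p j i S) \<le> 1"
    and subst: "\<And>j S i i'. S \<in> SS \<Longrightarrow> insert i' S \<in> SS \<Longrightarrow> i \<in> S \<Longrightarrow> i' \<noteq> i \<Longrightarrow>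
                  p j i S \<ge> p j i (insert i' S)"
    and patience: "\<And>j. l j > 0"
    and r_nonneg: "\<And>i j. r i j \<ge> 0"
    and opt: "mcdlp_optimal CARD('b) (\<lambda>t j. 1 / real CARD('b)) p r l SS x"
    and alpha: "\<alpha> \<ge> 1"
    and S: "S \<in> SS" and i: "i \<in> S"
  shows "measure_pmf.prob (ro_run x \<alpha> p l SS CARD('b))
             {st. type_arrived j st \<and> shown_before j S i st}
         / measure_pmf.prob (ro_run x \<alpha> p l SS CARD('b)) {st. type_arrived j st}
         \<le> 1 / (2 * \<alpha>)"
proof -
  have "\<alpha> > 0" using alpha by simp
  define c where "c = 1 / (2 * \<alpha>)"
  have "mcdlp_feasible CARD('b) (\<lambda>t j. 1 / real CARD('b)) p l SS x"
    using opt by (simp add: mcdlp_optimal_def)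
  from sum_offer_prob_containing_le[OF this \<open>\<alpha> > 0\<close>, of i j]
  have "(\<Sum>S'\<in>SS. if i \<in> S' then pmf (bernoulli_pmf (x j S' / \<alpha>)) True else 0) \<le> 2 * c"
    by (simp add: c_def)
  then have "measure_pmf.expectation (ro_run x \<alpha> p l SS CARD('b)) (shown_excess j S i c) \<le> 0"
    by (rule expectation_ro_run_shown_excess_nonpos[OF S])
  then have "measure_pmf.prob (ro_run x \<alpha> p l SS CARD('b)) {st. type_arrived j st \<and> shown_before j S i st}
        \<le> c * measure_pmf.prob (ro_run x \<alpha> p l SS CARD('b)) {st. type_arrived j st}"
    unfolding expectation_shown_excess by simp
  moreover have "0 \<le> c" using \<open>\<alpha> > 0\<close> by (simp add: c_def)
  \<comment> \<open>If type j never arrives, the quotient is 0 / 0 = 0.\<close>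
  ultimately show ?thesis
    unfolding c_def[symmetric] by (auto simp: divide_le_eq mult.commute)
qed

end
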